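(* Let $A\in\mathbb{R}^{n\times n}$, $C\in\mathbb{R}^{q\times n}$, $F\in\mathbb{R}^{n\times q}$, $c>0$, let $L=(l_{ij})\in\mathbb{R}^{m\times m}$ be irreducible with $\mathrm{Rank}(L)=m-1$, $l_{ij}\ge0$ for $i\ne j$, $\sum_jl_{ij}=0$, let $\varepsilon>0$ and let $\tilde L=(\tilde l_{ij})$ be $L$ with $l_{11}$ replaced by $l_{11}-\varepsilon$. Let $0>\lambda_1\ge\dots\ge\lambda_m$ be the eigenvalues of $\tilde L$. Suppose either (1) all variational equations $\frac{dz(t)}{dt}=[A+c\lambda_kFC]z(t)$, $k=1,\dots,m$, are exponentially stable; or (2) there exist a positive definite $P$ and $\epsilon>0$ with $\{P(A+c\lambda_kFC)\}^s<-\epsilon I_n$, $k=1,\dots,m$. Then $0$ is exponentially stable for the coupled system $$\dot x_i(t)=Ax_i(t)+c\sum_{j=1}^m\tilde l_{ij}FCx_j(t),\qquad i=1,\dots,m.$$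
   Context: For a square matrix $M$, $\{M\}^s=\frac12(M+M^T)$; $M<-\epsilon I$ means $M+\epsilon I$ is negative definite. *)

theory Defs
  imports "HOL-Analysis.Analysis"
begin

text \<open>Irreducible square matrix: there is no nonempty proper index set I
  that is closed in the sense l_ij = 0 for all i in I, j not in I
  (equivalently, L is not permutation-similar to a block triangular matrix).\<close>
definition irreducible_mat :: "real^'m^'m \<Rightarrow> bool" where
  "irreducible_mat L \<longleftrightarrow>
     \<not> (\<exists>I. I \<noteq> {} \<and> I \<noteq> UNIV \<and> (\<forall>i\<in>I. \<forall>j. j \<notin> I \<longrightarrow> L $ i $ j = 0))"

definition sym_part :: "real^'n^'n \<Rightarrow> real^'n^'n" where
  "sym_part M = (1/2) *\<^sub>R (M + transpose M)"

definition pos_def :: "real^'n^'n \<Rightarrow> bool" where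
  "pos_def P \<longleftrightarrow> transpose P = P \<and> (\<forall>x. x \<noteq> 0 \<longrightarrow> x \<bullet> (P *v x) > 0)"

definition neg_def :: "real^'n^'n \<Rightarrow> bool" where
  "neg_def M \<longleftrightarrow> transpose M = M \<and> (\<forall>x. x \<noteq> 0 \<longrightarrow> x \<bullet> (M *v x) < 0)"

definition exp_stable :: "('v::real_normed_vector \<Rightarrow> 'v) \<Rightarrow> bool" where
  "exp_stable f \<longleftrightarrow> (\<exists>K \<alpha>. K > 0 \<and> \<alpha> > 0 \<and>
     (\<forall>x::real \<Rightarrow> 'v.
        (\<forall>t\<ge>0. (x has_vector_derivative f (x t)) (at t within {0..})) \<longrightarrow>
        (\<forall>t\<ge>0. norm (x t) \<le> K * exp (- \<alpha> * t) * norm (x 0))))"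

definition coupled_rhs ::
  "real^'n^'n \<Rightarrow> real^'q^'n \<Rightarrow> real^'n^'q \<Rightarrow> real \<Rightarrow> real^'m^'m \<Rightarrow> real^'n^'m \<Rightarrow> real^'n^'m" where
  "coupled_rhs A F C c Lt X =
     (\<chi> i. A *v (X $ i) + c *\<^sub>R (\<Sum>j\<in>UNIV. (Lt $ i $ j) *\<^sub>R (F *v (C *v (X $ j)))))"

end

theory Submission
  imports Defs "Jordan_Normal_Form.Schur_Decomposition"
begin

(* Schur-triangularise the matrix Lt, which has real spectrum, from the left: W Lt = B W with
   B upper triangular with diagonal lam_1, ..., lam_m and W invertible. The modal coordinates
   y_k = sum_i W_ki x_i of a solution of the coupled system then form a cascade
   y_k' = (A + c B_kk F C) y_k + c sum_{l>k} B_kl F C y_l. The last block is unforced and every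
   other block is an exponentially stable system driven by exponentially decaying inputs, so by
   variation of constants all y_k decay exponentially, and so do the x_i = sum_k V_ik y_k.
   Under condition (2), the quadratic form of P is a Lyapunov function for every block. *)

(* Jordan_Normal_Form's matrix syntax clashes with that of HOL-Analysis, used in Defs. *)
hide_const (open) Matrix.mat Determinant.det Matrix.vec
no_notation vec_index (infixl "$" 100)
no_notation scalar_prod (infix "\<bullet>" 70)

section \<open>Triangularization of a matrix with real spectrum\<close>

(* Matrices of Jordan_Normal_Form are indexed by natural numbers; g enumerates the index type. *)
definition reindex_mat :: "(nat \<Rightarrow> 'm) \<Rightarrow> 'a^'m^'m \<Rightarrow> 'a mat" where
  "reindex_mat g N = Matrix.mat CARD('m) CARD('m) (\<lambda>(i, j). N $ g i $ g j)"

lemma det_reindex_mat: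
  fixes N :: "'a::comm_ring_1^'m^'m"
  assumes g: "bij_betw g {0..<CARD('m)} UNIV"
  shows "Determinant.det (reindex_mat g N) = det N"
proof -
  let ?n = "CARD('m)"
  let ?Phi = "\<lambda>q x. if x \<in> UNIV then g (q (inv_into {0..<?n} g x)) else x"
  have bij: "bij_betw ?Phi {q. q permutes {0..<?n}} {p. p permutes (UNIV::'m set)}"
    by (rule bij_betw_permutations[OF g])
  have inj: "inj_on g {0..<?n}"
    using g by (simp add: bij_betw_def)
  have "det N = (\<Sum>p\<in>{p. p permutes (UNIV::'m set)}. of_int (sign p) * (\<Prod>i\<in>UNIV. N $ i $ p i))"
    by (simp add: Determinants.det_def)
  also have "\<dots> = (\<Sum>q\<in>{q. q permutes {0..<?n}}. of_int (sign (?Phi q)) * (\<Prod>i\<in>UNIV. N $ i $ ?Phi q i))"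
    by (rule sum.reindex_bij_betw[OF bij, symmetric])
  also have "\<dots> = (\<Sum>q\<in>{q. q permutes {0..<?n}}. of_int (sign q) * (\<Prod>i=0..<?n. N $ g i $ g (q i)))"
  proof (rule sum.cong[OF refl])
    fix q assume q: "q \<in> {q. q permutes {0..<?n}}"
    have "?Phi q = map_permutation {0..<?n} g q"
      using g by (auto simp: map_permutation_def restrict_id_def bij_betw_def fun_eq_iff)
    then have sign: "sign (?Phi q) = sign q"
      using sign_map_permutation[OF inj] q by simp
    have "(\<Prod>i\<in>UNIV. N $ i $ ?Phi q i) = (\<Prod>i=0..<?n. N $ g i $ ?Phi q (g i))"
      by (rule prod.reindex_bij_betw[OF g, symmetric])
    also have "\<dots> = (\<Prod>i=0..<?n. N $ g i $ g (q i))"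
      by (rule prod.cong[OF refl]) (simp add: inv_into_f_f[OF inj])
    finally show "of_int (sign (?Phi q)) * (\<Prod>i\<in>UNIV. N $ i $ ?Phi q i)
        = of_int (sign q) * (\<Prod>i=0..<?n. N $ g i $ g (q i))"
      using sign by simp
  qed
  also have "\<dots> = Determinant.det (reindex_mat g N)"
    unfolding reindex_mat_def
    by (subst det_def'[of _ ?n]) (auto intro!: sum.cong prod.cong simp: permutes_def)
  finally show ?thesis
    by simp
qed

lemma poly_char_poly_reindex_mat:
  fixes N :: "real^'m^'m"
  assumes g: "bij_betw g {0..<CARD('m)} UNIV"
  shows "poly (char_poly (reindex_mat g N)) x = det (x *\<^sub>R mat 1 - N)"
proof -
  have "- char_matrix (reindex_mat g N) x = reindex_mat g (x *\<^sub>R mat 1 - N)"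
  proof (rule eq_matI)
    fix i j
    assume "i < dim_row (reindex_mat g (x *\<^sub>R mat 1 - N))" "j < dim_col (reindex_mat g (x *\<^sub>R mat 1 - N))"
    then have "i < CARD('m)" "j < CARD('m)"
      by (auto simp: reindex_mat_def)
    moreover from this have "(g i = g j) = (i = j)"
      using g by (auto simp: bij_betw_def inj_on_def)
    ultimately show "(- char_matrix (reindex_mat g N) x) $$ (i, j) = reindex_mat g (x *\<^sub>R mat 1 - N) $$ (i, j)"
      by (simp add: char_matrix_def reindex_mat_def Finite_Cartesian_Product.mat_def)
  qed (auto simp: char_matrix_def reindex_mat_def)
  moreover have "reindex_mat g N \<in> carrier_mat CARD('m) CARD('m)"
    by (simp add: reindex_mat_def)
  ultimately show ?thesis
    using char_poly_matrix det_reindex_mat[OF g] by metis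
qed

lemma char_poly_reindex_mat_eq_prod:
  fixes N :: "real^'m^'m"
  assumes g: "bij_betw g {0..<CARD('m)} UNIV"
    and eig: "\<forall>x::real. det (x *\<^sub>R mat 1 - N) = (\<Prod>k\<in>{1..CARD('m)}. (x - lam k))"
  shows "char_poly (reindex_mat g N) = (\<Prod>e\<leftarrow>map lam [1..<CARD('m)+1]. [:- e, 1:])"
proof -
  have "set [1..<CARD('m)+1] = {1..CARD('m)}"
    by (simp only: set_upt Suc_eq_plus1[symmetric] atLeastLessThanSuc_atLeastAtMost)
  then have "(\<Prod>k\<in>{1..CARD('m)}. (x - lam k)) = (\<Prod>k\<leftarrow>[1..<CARD('m)+1]. (x - lam k))" for x
    by (metis distinct_upt prod.distinct_set_conv_list)
  then have "poly (char_poly (reindex_mat g N)) x = poly (\<Prod>e\<leftarrow>map lam [1..<CARD('m)+1]. [:- e, 1:]) x" for x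
    using eig poly_char_poly_reindex_mat[OF g] by (simp add: poly_prod_list o_def del: upt_Suc)
  then show ?thesis
    by (simp add: poly_eq_poly_eq_iff[symmetric] fun_eq_iff)
qed

lemma index_mult_mat_sum:
  fixes A B :: "'a::comm_ring_1 mat"
  assumes "A \<in> carrier_mat n n" "B \<in> carrier_mat n n" "i < n" "j < n"
  shows "(A * B) $$ (i, j) = (\<Sum>l<n. A $$ (i, l) * B $$ (l, j))"
  using assms by (auto simp: scalar_prod_def atLeast0LessThan intro!: sum.cong)

lemma schur_left_triangularization:
  fixes M :: "real mat"
  assumes "M \<in> carrier_mat n n" and "char_poly M = (\<Prod>e\<leftarrow>es. [:- e, 1:])"
  obtains B P Q where "B \<in> carrier_mat n n" "P \<in> carrier_mat n n" "Q \<in> carrier_mat n n"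
    and "Q * M = B * Q" "P * Q = 1\<^sub>m n" "upper_triangular B" "diag_mat B = es"
proof -
  obtain B P Q where sd: "schur_decomposition M es = (B, P, Q)"
    by (cases "schur_decomposition M es") auto
  from schur_decomposition[OF assms sd]
  have "similar_mat_wit M B P Q" "upper_triangular B" "diag_mat B = es"
    by auto
  then have B: "B \<in> carrier_mat n n" and P: "P \<in> carrier_mat n n" and Q: "Q \<in> carrier_mat n n"
    and PQ: "P * Q = 1\<^sub>m n" and QP: "Q * P = 1\<^sub>m n" and M: "M = P * B * Q"
    using assms(1) by (auto simp: similar_mat_wit_def Let_def)
  have "Q * M = (Q * P) * B * Q"
    using B P Q by (simp add: M assoc_mult_mat[of _ n n _ n _ n])
  also have "\<dots> = B * Q"
    using QP B by simp
  finally show ?thesis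
    using that B P Q PQ \<open>upper_triangular B\<close> \<open>diag_mat B = es\<close> by blast
qed

lemma finite_index_enumeration:
  obtains g :: "nat \<Rightarrow> 'm::finite" and h :: "'m \<Rightarrow> nat"
  where "bij_betw g {0..<CARD('m)} UNIV" "\<And>i. h i < CARD('m)" "\<And>i. g (h i) = i"
    and "\<And>k. k < CARD('m) \<Longrightarrow> h (g k) = k"
proof -
  obtain g where g: "bij_betw g {0..<CARD('m)} (UNIV :: 'm set)"
    using ex_bij_betw_nat_finite[of "UNIV :: 'm set"] by auto
  define h where "h = inv_into {0..<CARD('m)} g"
  have i: "i \<in> g ` {0..<CARD('m)}" for i
    using g by (simp add: bij_betw_def)
  have "h i < CARD('m)" "g (h i) = i" for i
    using inv_into_into[OF i] f_inv_into_f[OF i] by (simp_all add: h_def)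
  moreover have "h (g k) = k" if "k < CARD('m)" for k
    using g that by (auto simp: h_def bij_betw_def inv_into_f_f)
  ultimately show ?thesis
    using that g by blast
qed

lemma real_spectrum_left_triangularization:
  fixes Lt :: "real^'m^'m" and lam :: "nat \<Rightarrow> real"
  assumes eig: "\<forall>x::real. det (x *\<^sub>R mat 1 - Lt) = (\<Prod>k\<in>{1..CARD('m)}. (x - lam k))"
  obtains W :: "nat \<Rightarrow> 'm \<Rightarrow> real" and V :: "'m \<Rightarrow> nat \<Rightarrow> real" and b :: "nat \<Rightarrow> nat \<Rightarrow> real"
  where "\<And>k j. k < CARD('m) \<Longrightarrow> (\<Sum>i\<in>UNIV. W k i * Lt $ i $ j) = (\<Sum>l<CARD('m). b k l * W l j)"
    and "\<And>k l. k < CARD('m) \<Longrightarrow> l < k \<Longrightarrow> b k l = 0"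
    and "\<And>k. k < CARD('m) \<Longrightarrow> b k k \<in> lam ` {1..CARD('m)}"
    and "\<And>i j. (\<Sum>k<CARD('m). V i k * W k j) = (if i = j then 1 else 0)"
proof -
  let ?n = "CARD('m)"
  obtain g :: "nat \<Rightarrow> 'm" and h where g: "bij_betw g {0..<?n} UNIV"
    and h: "\<And>i. h i < ?n" "\<And>i. g (h i) = i" and hg: "\<And>k. k < ?n \<Longrightarrow> h (g k) = k"
    using finite_index_enumeration[where 'm = 'm] by blast
  have M: "reindex_mat g Lt \<in> carrier_mat ?n ?n"
    by (simp add: reindex_mat_def)
  obtain B P Q where B: "B \<in> carrier_mat ?n ?n" and P: "P \<in> carrier_mat ?n ?n" and Q: "Q \<in> carrier_mat ?n ?n"
    and QM: "Q * reindex_mat g Lt = B * Q" and PQ: "P * Q = 1\<^sub>m ?n"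
    and upper: "upper_triangular B" and diag: "diag_mat B = map lam [1..<?n+1]"
    using schur_left_triangularization[OF M char_poly_reindex_mat_eq_prod[OF g eig]] by blast
  (* W and V are Q and its inverse P, read through the enumeration. *)
  show ?thesis
  proof (rule that[of "\<lambda>k i. Q $$ (k, h i)" "\<lambda>k l. B $$ (k, l)" "\<lambda>i k. P $$ (h i, k)"])
    fix k j assume k: "k < ?n"
    have "(\<Sum>i\<in>UNIV. Q $$ (k, h i) * Lt $ i $ j) = (\<Sum>i<?n. Q $$ (k, i) * reindex_mat g Lt $$ (i, h j))"
      by (subst sum.reindex_bij_betw[OF g, symmetric])
        (auto simp: reindex_mat_def h hg atLeast0LessThan intro!: sum.cong)
    also have "\<dots> = (B * Q) $$ (k, h j)"
      by (simp add: index_mult_mat_sum[OF Q M k h(1), symmetric] QM)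
    also have "\<dots> = (\<Sum>l<?n. B $$ (k, l) * Q $$ (l, h j))"
      by (rule index_mult_mat_sum[OF B Q k h(1)])
    finally show "(\<Sum>i\<in>UNIV. Q $$ (k, h i) * Lt $ i $ j) = (\<Sum>l<?n. B $$ (k, l) * Q $$ (l, h j))" .
  next
    fix k l assume "k < ?n" "l < k"
    then show "B $$ (k, l) = 0"
      using upper B by (auto simp: upper_triangular_def)
  next
    fix k assume "k < ?n"
    then have "B $$ (k, k) = diag_mat B ! k"
      using B by (simp add: diag_mat_def)
    also have "\<dots> = lam (k + 1)"
      using diag \<open>k < ?n\<close> by (simp add: nth_map_upt del: upt_Suc)
    finally show "B $$ (k, k) \<in> lam ` {1..?n}"
      using \<open>k < ?n\<close> by auto
  next
    fix i j
    have "(\<Sum>k<?n. P $$ (h i, k) * Q $$ (k, h j)) = (P * Q) $$ (h i, h j)"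
      by (rule index_mult_mat_sum[OF P Q h(1) h(1), symmetric])
    also have "\<dots> = (if i = j then 1 else 0)"
      using PQ h by (simp, metis h(2))
    finally show "(\<Sum>k<?n. P $$ (h i, k) * Q $$ (k, h j)) = (if i = j then 1 else 0)" .
  qed
qed

section \<open>The matrix exponential\<close>

primrec matpow :: "'a::semiring_1^'n^'n \<Rightarrow> nat \<Rightarrow> 'a^'n^'n" where
  "matpow D 0 = mat 1"
| "matpow D (Suc k) = D ** matpow D k"

lemma matpow_Suc_right: "matpow D (Suc k) = matpow D k ** D"
  by (induction k) (simp_all add: matrix_mul_assoc)

lemma bounded_linear_matrix_mult_left: "bounded_linear (\<lambda>M::real^'n^'n. D ** M)"
  by (rule linear_conv_bounded_linear[THEN iffD1], rule linearI)
    (simp_all add: matrix_add_ldistrib matrix_scalar_ac scalar_matrix_assoc)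

lemma bounded_linear_matrix_mult_right: "bounded_linear (\<lambda>M::real^'n^'n. M ** D)"
  by (rule linear_conv_bounded_linear[THEN iffD1], rule linearI)
    (simp_all add: matrix_matrix_mult_def Finite_Cartesian_Product.vec_eq_iff sum.distrib
      algebra_simps sum_distrib_left)

lemma bounded_linear_matrix_entry: "bounded_linear (\<lambda>M::real^'n^'m. M $ i $ j)"
  using bounded_linear_compose[OF bounded_linear_vec_nth bounded_linear_vec_nth] .

lemma norm_vec_le_sum_norm: "norm (x::'a::real_normed_vector^'n) \<le> (\<Sum>i\<in>UNIV. norm (x $ i))"
  unfolding norm_vec_def by (rule L2_set_le_sum) simp

lemma norm_le_sum_abs_entries: "norm (M::real^'n^'m) \<le> (\<Sum>i\<in>UNIV. \<Sum>j\<in>UNIV. \<bar>M $ i $ j\<bar>)"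
  by (rule order_trans[OF norm_vec_le_sum_norm sum_mono[OF norm_le_l1_cart]])

lemma matpow_entry_bound:
  fixes D :: "real^'n^'n"
  defines "B \<equiv> (\<Sum>i\<in>UNIV. \<Sum>j\<in>UNIV. \<bar>D $ i $ j\<bar>) + 1"
  shows "\<bar>matpow D k $ i $ j\<bar> \<le> B ^ k"
proof (induction k arbitrary: i j)
  case 0
  then show ?case
    by (simp add: Finite_Cartesian_Product.mat_def)
next
  case (Suc k)
  have row: "(\<Sum>l\<in>UNIV. \<bar>D $ i $ l\<bar>) \<le> B"
    unfolding B_def using member_le_sum[of i UNIV "\<lambda>i. \<Sum>j\<in>UNIV. \<bar>D $ i $ j\<bar>"]
    by (simp add: sum_nonneg)
  have "\<bar>matpow D (Suc k) $ i $ j\<bar> \<le> (\<Sum>l\<in>UNIV. \<bar>D $ i $ l\<bar> * B ^ k)"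
    unfolding matpow.simps matrix_matrix_mult_def vec_lambda_beta
    by (rule order_trans[OF sum_abs]) (auto intro!: sum_mono mult_left_mono simp: abs_mult Suc.IH)
  also have "\<dots> \<le> B * B ^ k"
    unfolding sum_distrib_right[symmetric] using row
    by (rule mult_right_mono) (simp add: B_def sum_nonneg)
  finally show ?case
    by simp
qed

definition mexp :: "real^'n^'n \<Rightarrow> real \<Rightarrow> real^'n^'n" where
  "mexp D t = (\<Sum>k. (t ^ k / fact k) *\<^sub>R matpow D k)"

lemma summable_mexp:
  fixes D :: "real^'n^'n"
  shows "summable (\<lambda>k. (t ^ k / fact k) *\<^sub>R matpow D k)"
proof -
  obtain B where B: "\<And>k i j. \<bar>matpow D k $ i $ j\<bar> \<le> B ^ k"
    using matpow_entry_bound by blast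
  let ?N = "real (CARD('n) * CARD('n))"
  have "summable (\<lambda>k. ?N * ((B * \<bar>t\<bar>) ^ k /\<^sub>R fact k))"
    by (intro summable_mult summable_exp_generic)
  then show ?thesis
  proof (rule summable_comparison_test'[where N = 0])
    fix k :: nat
    have "norm (matpow D k) \<le> ?N * B ^ k"
      using order_trans[OF norm_le_sum_abs_entries sum_mono[OF sum_mono[OF B]]] by (simp add: mult.assoc)
    then have "\<bar>t\<bar> ^ k / fact k * norm (matpow D k) \<le> \<bar>t\<bar> ^ k / fact k * (?N * B ^ k)"
      by (rule mult_left_mono) simp
    then show "norm ((t ^ k / fact k) *\<^sub>R matpow D k) \<le> ?N * ((B * \<bar>t\<bar>) ^ k /\<^sub>R fact k)"
      by (simp add: power_mult_distrib power_abs field_simps)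
  qed
qed

lemma mexp_entry:
  fixes D :: "real^'n^'n"
  shows "mexp D t $ i $ j = (\<Sum>k. matpow D k $ i $ j / fact k * t ^ k)"
  using bounded_linear.suminf[OF bounded_linear_matrix_entry summable_mexp]
  by (simp add: mexp_def mult_ac)

lemma mexp_0 [simp]: "mexp D 0 = mat 1"
  unfolding mexp_def by (subst suminf_finite[of "{0}"]) auto

lemma matrix_mult_mexp: "D ** mexp D t = (\<Sum>k. (t ^ k / fact k) *\<^sub>R matpow D (Suc k))"
proof -
  have "D ** mexp D t = (\<Sum>k. D ** ((t ^ k / fact k) *\<^sub>R matpow D k))"
    unfolding mexp_def by (rule bounded_linear.suminf[OF bounded_linear_matrix_mult_left summable_mexp])
  then show ?thesis
    by (simp add: matrix_scalar_ac scalar_matrix_assoc[symmetric])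
qed

lemma mexp_matrix_mult_commute: "mexp D t ** D = D ** mexp D t"
proof -
  have "mexp D t ** D = (\<Sum>k. ((t ^ k / fact k) *\<^sub>R matpow D k) ** D)"
    unfolding mexp_def by (rule bounded_linear.suminf[OF bounded_linear_matrix_mult_right summable_mexp])
  also have "\<dots> = D ** mexp D t"
    by (simp add: matrix_mult_mexp scalar_matrix_assoc[symmetric] matpow_Suc_right[symmetric])
  finally show ?thesis .
qed

lemma has_vector_derivative_vec:
  fixes f :: "real \<Rightarrow> 'a::real_normed_vector^'n"
  assumes "\<And>i. ((\<lambda>t. f t $ i) has_vector_derivative f' $ i) (at t within S)"
  shows "(f has_vector_derivative f') (at t within S)"
proof -
  let ?q = "\<lambda>y. (1 / norm (y - t)) *\<^sub>R (f y - (f t + (y - t) *\<^sub>R f'))"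
  have "((\<lambda>y. \<chi> i. ?q y $ i) \<longlongrightarrow> (\<chi> i. 0)) (at t within S)"
    using assms by (intro tendsto_vec_lambda) (simp add: has_vector_derivative_def has_derivative_within)
  moreover have "(\<chi> i. 0) = (0 :: 'a^'n)"
    by (simp add: Finite_Cartesian_Product.vec_eq_iff)
  ultimately have "(?q \<longlongrightarrow> 0) (at t within S)"
    by (simp only: vec_lambda_eta)
  then show ?thesis
    unfolding has_vector_derivative_def has_derivative_within
    using bounded_linear_scaleR_left by blast
qed

lemma has_real_derivative_mexp_entry:
  fixes D :: "real^'n^'n"
  shows "((\<lambda>t. mexp D t $ i $ j) has_real_derivative (D ** mexp D t) $ i $ j) (at t)"
proof -
  let ?a = "\<lambda>k. matpow D k $ i $ j / fact k"
  have "summable (\<lambda>k. ((x ^ k / fact k) *\<^sub>R matpow D k) $ i $ j)" for x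
    by (rule bounded_linear.summable[OF bounded_linear_matrix_entry summable_mexp])
  then have "summable (\<lambda>k. ?a k * x ^ k)" for x
    by (simp add: mult.commute)
  then have deriv: "((\<lambda>t. \<Sum>k. ?a k * t ^ k) has_real_derivative (\<Sum>k. diffs ?a k * t ^ k)) (at t)"
    by (rule termdiffs_strong_converges_everywhere)
  have series: "(\<lambda>t. mexp D t $ i $ j) = (\<lambda>t. \<Sum>k. ?a k * t ^ k)"
    by (intro ext mexp_entry)
  have "(D ** mexp D t) $ i $ j = (\<Sum>k. (D ** ((t ^ k / fact k) *\<^sub>R matpow D k)) $ i $ j)"
    unfolding mexp_def
    by (rule bounded_linear.suminf[OF bounded_linear_compose[OF bounded_linear_matrix_entry
          bounded_linear_matrix_mult_left] summable_mexp])
  also have "\<dots> = (\<Sum>k. diffs ?a k * t ^ k)"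
    by (simp add: matrix_scalar_ac diffs_def scalar_matrix_assoc[symmetric] mult.commute)
  finally have coeffs: "(D ** mexp D t) $ i $ j = (\<Sum>k. diffs ?a k * t ^ k)" .
  show ?thesis
    unfolding series coeffs by (rule deriv)
qed

lemma has_vector_derivative_mexp: "(mexp D has_vector_derivative D ** mexp D t) (at t within S)"
  by (rule has_vector_derivative_at_within, intro has_vector_derivative_vec)
    (rule has_real_derivative_mexp_entry[unfolded has_real_derivative_iff_has_vector_derivative])

lemma bounded_bilinear_matrix_vector_mult: "bounded_bilinear (\<lambda>(M::real^'n^'m) (v::real^'n). M *v v)"
  by (rule bilinear_conv_bounded_bilinear[THEN iffD1])
    (auto simp: bilinear_def intro!: linearI simp: matrix_vector_mult_add_rdistrib
      matrix_vector_right_distrib scaleR_matrix_vector_assoc)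

lemma has_vector_derivative_mexp_vector:
  "((\<lambda>t. mexp D t *v v) has_vector_derivative D *v (mexp D t *v v)) (at t within S)"
  using bounded_linear.has_vector_derivative[OF
      bounded_bilinear.bounded_linear_left[OF bounded_bilinear_matrix_vector_mult] has_vector_derivative_mexp]
  by (simp add: matrix_vector_mul_assoc)

lemma exp_stable_mexp_bound:
  fixes D :: "real^'n^'n"
  assumes "exp_stable (\<lambda>z. D *v z)"
  obtains K \<alpha> where "K > 0" "\<alpha> > 0"
    and "\<And>t v. t \<ge> 0 \<Longrightarrow> norm (mexp D t *v v) \<le> K * exp (- \<alpha> * t) * norm v"
proof -
  from assms obtain K \<alpha> where "K > 0" "\<alpha> > 0" and
    stable: "\<And>x::real \<Rightarrow> real^'n. \<forall>t\<ge>0. (x has_vector_derivative D *v x t) (at t within {0..}) \<Longrightarrow>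
        \<forall>t\<ge>0. norm (x t) \<le> K * exp (- \<alpha> * t) * norm (x 0)"
    unfolding exp_stable_def by blast
  moreover have "norm (mexp D t *v v) \<le> K * exp (- \<alpha> * t) * norm v" if "t \<ge> 0" for t v
    using stable[of "\<lambda>t. mexp D t *v v"] that by (simp add: has_vector_derivative_mexp_vector)
  ultimately show ?thesis
    using that by blast
qed

section \<open>Exponentially stable systems with decaying inputs\<close>

lemma norm_diff_le_of_vector_derivative_bound:
  fixes h :: "real \<Rightarrow> 'a::real_normed_vector"
  assumes h': "\<And>s. s \<ge> 0 \<Longrightarrow> (h has_vector_derivative h' s) (at s within {0..})"
    and bound: "\<And>s. 0 < s \<Longrightarrow> s < T \<Longrightarrow> norm (h' s) \<le> c" and "T \<ge> 0"
  shows "norm (h T - h 0) \<le> T * c"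
proof (cases "T = 0")
  case False
  have "norm (h T - h 0) \<le> (\<lambda>s. s * c) T - (\<lambda>s. s * c) 0"
  proof (rule differentiable_bound_general)
    show "0 < T"
      using False \<open>T \<ge> 0\<close> by simp
    show "continuous_on {0..T} h"
      by (rule continuous_on_vector_derivative) (auto intro: has_vector_derivative_within_subset[OF h'])
    show "continuous_on {0..T} (\<lambda>s. s * c)"
      by (intro continuous_intros)
    fix s assume s: "0 < s" "s < T"
    have "(h has_vector_derivative h' s) (at s within {0<..})"
      by (rule has_vector_derivative_within_subset[OF h']) (use s in auto)
    then show "(h has_vector_derivative h' s) (at s)"
      using has_vector_derivative_within_open[of s "{0<..}"] s by auto
    have "((\<lambda>s. s * c) has_real_derivative 1 * c) (at s)"
      by (rule DERIV_cmult_right[OF DERIV_ident])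
    then show "((\<lambda>s. s * c) has_vector_derivative c) (at s)"
      by (simp add: has_real_derivative_iff_has_vector_derivative)
    show "norm (h' s) \<le> c"
      using bound s by simp
  qed
  then show ?thesis
    by simp
qed simp

lemma has_vector_derivative_variation_of_constants:
  assumes "(z has_vector_derivative D *v z s + u s) (at s within S)"
  shows "((\<lambda>s. mexp D (T - s) *v z s) has_vector_derivative mexp D (T - s) *v u s) (at s within S)"
proof -
  have "((\<lambda>s. T - s) has_vector_derivative 0 - 1) (at s within S)"
    by (intro has_vector_derivative_diff has_vector_derivative_const has_vector_derivative_id)
  from vector_diff_chain_within[OF this has_vector_derivative_mexp]
  have "((\<lambda>s. mexp D (T - s)) has_vector_derivative - (D ** mexp D (T - s))) (at s within S)"
    by (simp add: o_def)
  from bounded_bilinear.has_vector_derivative[OF bounded_bilinear_matrix_vector_mult this assms]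
  show ?thesis
    by (simp add: matrix_vector_right_distrib matrix_vector_mul_assoc mexp_matrix_mult_commute
        bounded_bilinear.minus_left[OF bounded_bilinear_matrix_vector_mult])
qed

lemma variation_of_constants_bound:
  fixes D :: "real^'n^'n" and z u :: "real \<Rightarrow> real^'n"
  assumes z: "\<forall>s\<ge>0. (z has_vector_derivative D *v z s + u s) (at s within {0..})"
    and mexp_bound: "\<And>s v. s \<ge> 0 \<Longrightarrow> norm (mexp D s *v v) \<le> K * exp (- \<alpha> * s) * norm v"
    and u_bound: "\<And>s. s \<ge> 0 \<Longrightarrow> norm (u s) \<le> M * exp (- \<beta> * s)"
    and "K \<ge> 0" "M \<ge> 0" "T \<ge> 0"
  shows "norm (z T) \<le> K * exp (- \<alpha> * T) * norm (z 0) + T * (K * M * exp (- min \<alpha> \<beta> * T))"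
proof -
  define h where "h s = mexp D (T - s) *v z s" for s
  have "norm (h T - h 0) \<le> T * (K * M * exp (- min \<alpha> \<beta> * T))"
  proof (rule norm_diff_le_of_vector_derivative_bound[OF _ _ \<open>T \<ge> 0\<close>])
    show "(h has_vector_derivative mexp D (T - s) *v u s) (at s within {0..})" if "s \<ge> 0" for s
      unfolding h_def using z that by (intro has_vector_derivative_variation_of_constants) simp
    fix s assume s: "0 < s" "s < T"
    have "min \<alpha> \<beta> * (T - s) \<le> \<alpha> * (T - s)" "min \<alpha> \<beta> * s \<le> \<beta> * s"
      using s by (auto intro!: mult_right_mono)
    then have "- \<alpha> * (T - s) - \<beta> * s \<le> - min \<alpha> \<beta> * T"
      unfolding right_diff_distrib by linarith
    then have "exp (- \<alpha> * (T - s)) * exp (- \<beta> * s) \<le> exp (- min \<alpha> \<beta> * T)"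
      unfolding exp_add[symmetric] by simp
    then have "(K * M) * (exp (- \<alpha> * (T - s)) * exp (- \<beta> * s)) \<le> K * M * exp (- min \<alpha> \<beta> * T)"
      using \<open>K \<ge> 0\<close> \<open>M \<ge> 0\<close> by (simp add: mult_left_mono)
    moreover have "norm (mexp D (T - s) *v u s) \<le> K * exp (- \<alpha> * (T - s)) * norm (u s)"
      using mexp_bound s by simp
    moreover have "\<dots> \<le> K * exp (- \<alpha> * (T - s)) * (M * exp (- \<beta> * s))"
      using u_bound s \<open>K \<ge> 0\<close> by (simp add: mult_left_mono)
    ultimately show "norm (mexp D (T - s) *v u s) \<le> K * M * exp (- min \<alpha> \<beta> * T)"
      by (simp only: mult_ac)
  qed
  moreover have "norm (h 0) \<le> K * exp (- \<alpha> * T) * norm (z 0)"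
    unfolding h_def using mexp_bound \<open>T \<ge> 0\<close> by simp
  moreover have "h T = z T"
    by (simp add: h_def)
  ultimately show ?thesis
    using norm_triangle_ineq[of "h 0" "h T - h 0"] by simp
qed

lemma mult_exp_neg_le:
  fixes \<gamma> T :: real
  assumes "\<gamma> > 0"
  shows "T * exp (- \<gamma> * T) \<le> 1 / \<gamma>"
proof -
  have "\<gamma> * T \<le> exp (\<gamma> * T)"
    using exp_ge_add_one_self[of "\<gamma> * T"] by linarith
  then show ?thesis
    using assms by (simp add: field_simps exp_minus)
qed

lemma exp_stable_forced_decay:
  fixes D :: "real^'n^'n"
  assumes "exp_stable (\<lambda>z. D *v z)" and "\<beta> > 0"
  obtains K \<gamma> where "K > 0" "\<gamma> > 0"
    and "\<And>z u M T. \<forall>s\<ge>0. (z has_vector_derivative D *v z s + u s) (at s within {0..}) \<Longrightarrow>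
      (\<And>s. s \<ge> 0 \<Longrightarrow> norm (u s) \<le> M * exp (- \<beta> * s)) \<Longrightarrow> M \<ge> 0 \<Longrightarrow> T \<ge> 0 \<Longrightarrow>
      norm (z T) \<le> K * exp (- \<gamma> * T) * (norm (z 0) + M)"
proof -
  obtain K \<alpha> where "K > 0" "\<alpha> > 0"
    and mexp_bound: "\<And>t v. t \<ge> 0 \<Longrightarrow> norm (mexp D t *v v) \<le> K * exp (- \<alpha> * t) * norm v"
    using exp_stable_mexp_bound[OF assms(1)] by blast
  define \<gamma> where "\<gamma> = min \<alpha> \<beta> / 2"
  have "\<gamma> > 0"
    using \<open>\<alpha> > 0\<close> \<open>\<beta> > 0\<close> by (simp add: \<gamma>_def)
  have "norm (z T) \<le> (K + K / \<gamma>) * exp (- \<gamma> * T) * (norm (z 0) + M)"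
    if z: "\<forall>s\<ge>0. (z has_vector_derivative D *v z s + u s) (at s within {0..})"
      and u: "\<And>s. s \<ge> 0 \<Longrightarrow> norm (u s) \<le> M * exp (- \<beta> * s)" and "M \<ge> 0" "T \<ge> 0"
    for z u M T
  proof -
    have "exp (- min \<alpha> \<beta> * T) = exp (- \<gamma> * T) * exp (- \<gamma> * T)"
      by (simp add: \<gamma>_def flip: exp_add)
    then have T_bound: "T * exp (- min \<alpha> \<beta> * T) \<le> exp (- \<gamma> * T) / \<gamma>"
      using mult_right_mono[OF mult_exp_neg_le[OF \<open>\<gamma> > 0\<close>, of T] exp_ge_zero[of "- \<gamma> * T"]]
      by (simp add: mult.assoc)
    have "T * (K * M * exp (- min \<alpha> \<beta> * T)) \<le> K * M * (exp (- \<gamma> * T) / \<gamma>)"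
      using mult_left_mono[OF T_bound, of "K * M"] \<open>K > 0\<close> \<open>M \<ge> 0\<close> by (simp add: mult_ac)
    moreover have "\<gamma> * T \<le> \<alpha> * T"
      using \<open>T \<ge> 0\<close> \<open>\<alpha> > 0\<close> by (intro mult_right_mono) (auto simp: \<gamma>_def)
    then have "K * exp (- \<alpha> * T) * norm (z 0) \<le> K * exp (- \<gamma> * T) * norm (z 0)"
      using \<open>K > 0\<close> by (intro mult_right_mono mult_left_mono) auto
    moreover have "norm (z T) \<le> K * exp (- \<alpha> * T) * norm (z 0) + T * (K * M * exp (- min \<alpha> \<beta> * T))"
      by (rule variation_of_constants_bound[OF z mexp_bound u])
        (use \<open>K > 0\<close> \<open>M \<ge> 0\<close> \<open>T \<ge> 0\<close> in auto)
    ultimately have "norm (z T) \<le> K * exp (- \<gamma> * T) * norm (z 0) + K * M * (exp (- \<gamma> * T) / \<gamma>)"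
      by linarith
    also have "\<dots> \<le> (K + K / \<gamma>) * exp (- \<gamma> * T) * (norm (z 0) + M)"
      using \<open>K > 0\<close> \<open>\<gamma> > 0\<close> \<open>M \<ge> 0\<close> by (simp add: field_simps)
    finally show ?thesis .
  qed
  moreover have "K + K / \<gamma> > 0"
    using \<open>K > 0\<close> \<open>\<gamma> > 0\<close> by (simp add: add_pos_pos)
  ultimately show ?thesis
    using that \<open>\<gamma> > 0\<close> by blast
qed

lemma exp_decay_bound_mono:
  fixes x :: real
  assumes "x \<le> K * exp (- \<gamma> * t) * R" and "K \<le> K'" "\<gamma>' \<le> \<gamma>" "t \<ge> 0" "R \<ge> 0" "K \<ge> 0"
  shows "x \<le> K' * exp (- \<gamma>' * t) * R"
proof -
  have "exp (- \<gamma> * t) \<le> exp (- \<gamma>' * t)"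
    using assms by (simp add: mult_right_mono)
  then have "K * exp (- \<gamma> * t) * R \<le> K' * exp (- \<gamma>' * t) * R"
    using assms by (intro mult_right_mono mult_mono) auto
  with assms(1) show ?thesis
    by linarith
qed

lemma exp_stable_forced_by_decaying_states:
  fixes D :: "real^'n^'n" and E :: "nat \<Rightarrow> real^'n^'n"
  assumes "exp_stable (\<lambda>z. D *v z)" and "\<gamma> > 0" and "K \<ge> 0"
  obtains K' \<gamma>' where "K' > 0" "\<gamma>' > 0"
    and "\<And>z w R t. \<forall>s\<ge>0. (z has_vector_derivative D *v z s + (\<Sum>l\<in>L. E l *v w s l)) (at s within {0..}) \<Longrightarrow>
      (\<And>l s. l \<in> L \<Longrightarrow> s \<ge> 0 \<Longrightarrow> norm (w s l) \<le> K * exp (- \<gamma> * s) * R) \<Longrightarrow>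
      norm (z 0) \<le> R \<Longrightarrow> t \<ge> 0 \<Longrightarrow> norm (z t) \<le> K' * exp (- \<gamma>' * t) * R"
proof -
  obtain K2 \<gamma>2 where "K2 > 0" "\<gamma>2 > 0" and forced: "\<And>z u M T.
      \<forall>s\<ge>0. (z has_vector_derivative D *v z s + u s) (at s within {0..}) \<Longrightarrow>
      (\<And>s. s \<ge> 0 \<Longrightarrow> norm (u s) \<le> M * exp (- \<gamma> * s)) \<Longrightarrow> M \<ge> 0 \<Longrightarrow> T \<ge> 0 \<Longrightarrow>
      norm (z T) \<le> K2 * exp (- \<gamma>2 * T) * (norm (z 0) + M)"
    using exp_stable_forced_decay[OF assms(1,2)] by blast
  define NE where "NE = (\<Sum>l\<in>L. onorm ((*v) (E l)))"
  have "NE \<ge> 0"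
    unfolding NE_def by (intro sum_nonneg onorm_pos_le matrix_vector_mul_bounded_linear)
  have "norm (z t) \<le> K2 * (1 + NE * K) * exp (- \<gamma>2 * t) * R"
    if z: "\<forall>s\<ge>0. (z has_vector_derivative D *v z s + (\<Sum>l\<in>L. E l *v w s l)) (at s within {0..})"
      and w: "\<And>l s. l \<in> L \<Longrightarrow> s \<ge> 0 \<Longrightarrow> norm (w s l) \<le> K * exp (- \<gamma> * s) * R"
      and "norm (z 0) \<le> R" "t \<ge> 0" for z w R t
  proof -
    have "R \<ge> 0"
      using \<open>norm (z 0) \<le> R\<close> norm_ge_zero[of "z 0"] by linarith
    have "norm (\<Sum>l\<in>L. E l *v w s l) \<le> NE * K * R * exp (- \<gamma> * s)" if "s \<ge> 0" for s
    proof -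
      have "norm (\<Sum>l\<in>L. E l *v w s l) \<le> (\<Sum>l\<in>L. onorm ((*v) (E l)) * norm (w s l))"
        by (intro order_trans[OF norm_sum] sum_mono onorm matrix_vector_mul_bounded_linear)
      also have "\<dots> \<le> (\<Sum>l\<in>L. onorm ((*v) (E l)) * (K * exp (- \<gamma> * s) * R))"
        using w \<open>s \<ge> 0\<close> by (intro sum_mono mult_left_mono onorm_pos_le matrix_vector_mul_bounded_linear) auto
      finally show ?thesis
        by (simp add: NE_def sum_distrib_left mult_ac)
    qed
    then have "norm (z t) \<le> K2 * exp (- \<gamma>2 * t) * (norm (z 0) + NE * K * R)"
      using \<open>NE \<ge> 0\<close> \<open>K \<ge> 0\<close> \<open>R \<ge> 0\<close> \<open>t \<ge> 0\<close> by (intro forced[OF z]) auto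
    also have "\<dots> \<le> K2 * exp (- \<gamma>2 * t) * ((1 + NE * K) * R)"
      using \<open>norm (z 0) \<le> R\<close> \<open>K2 > 0\<close> by (intro mult_left_mono) (auto simp: algebra_simps)
    finally show ?thesis
      by (simp add: mult_ac)
  qed
  moreover have "K2 * (1 + NE * K) > 0"
    using \<open>K2 > 0\<close> \<open>NE \<ge> 0\<close> \<open>K \<ge> 0\<close> by (simp add: add_pos_nonneg)
  ultimately show ?thesis
    using that \<open>\<gamma>2 > 0\<close> by blast
qed

definition cascade_solution ::
  "(nat \<Rightarrow> real^'n^'n) \<Rightarrow> (nat \<Rightarrow> nat \<Rightarrow> real^'n^'n) \<Rightarrow> nat \<Rightarrow> (real \<Rightarrow> nat \<Rightarrow> real^'n) \<Rightarrow> bool" where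
  "cascade_solution D E n y \<longleftrightarrow> (\<forall>k<n. \<forall>t\<ge>0. ((\<lambda>t. y t k) has_vector_derivative
     D k *v y t k + (\<Sum>l\<in>{k<..<n}. E k l *v y t l)) (at t within {0..}))"

lemma cascade_exp_decay_step:
  fixes D :: "nat \<Rightarrow> real^'n^'n" and E :: "nat \<Rightarrow> nat \<Rightarrow> real^'n^'n"
  assumes "exp_stable (\<lambda>z. D k *v z)" and "k < n" "K > 0" "\<gamma> > 0"
    and later: "\<And>y l t. cascade_solution D E n y \<Longrightarrow> k < l \<Longrightarrow> l < n \<Longrightarrow> t \<ge> 0 \<Longrightarrow>
      norm (y t l) \<le> K * exp (- \<gamma> * t) * (\<Sum>l<n. norm (y 0 l))"
  obtains K' \<gamma>' where "K' > 0" "\<gamma>' > 0"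
    and "\<And>y l t. cascade_solution D E n y \<Longrightarrow> k \<le> l \<Longrightarrow> l < n \<Longrightarrow> t \<ge> 0 \<Longrightarrow>
      norm (y t l) \<le> K' * exp (- \<gamma>' * t) * (\<Sum>l<n. norm (y 0 l))"
proof -
  obtain K1 \<gamma>1 where "K1 > 0" "\<gamma>1 > 0" and head: "\<And>z w R t.
      \<forall>s\<ge>0. (z has_vector_derivative D k *v z s + (\<Sum>l\<in>{k<..<n}. E k l *v w s l)) (at s within {0..}) \<Longrightarrow>
      (\<And>l s. l \<in> {k<..<n} \<Longrightarrow> s \<ge> 0 \<Longrightarrow> norm (w s l) \<le> K * exp (- \<gamma> * s) * R) \<Longrightarrow>
      norm (z 0) \<le> R \<Longrightarrow> t \<ge> 0 \<Longrightarrow> norm (z t) \<le> K1 * exp (- \<gamma>1 * t) * R"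
    using exp_stable_forced_by_decaying_states[OF assms(1) \<open>\<gamma> > 0\<close> less_imp_le[OF \<open>K > 0\<close>],
        where E = "E k" and L = "{k<..<n}"]
    by blast
  have "norm (y t l) \<le> max K K1 * exp (- min \<gamma> \<gamma>1 * t) * (\<Sum>l<n. norm (y 0 l))"
    if y: "cascade_solution D E n y" and "k \<le> l" "l < n" "t \<ge> 0" for y l t
  proof -
    have "norm (y t l) \<le> (if l = k then K1 else K) * exp (- (if l = k then \<gamma>1 else \<gamma>) * t)
        * (\<Sum>l<n. norm (y 0 l))"
    proof (cases "l = k")
      case True
      have "norm (y t k) \<le> K1 * exp (- \<gamma>1 * t) * (\<Sum>l<n. norm (y 0 l))"
      proof (rule head)
        show "\<forall>s\<ge>0. ((\<lambda>t. y t k) has_vector_derivative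
            D k *v y s k + (\<Sum>l\<in>{k<..<n}. E k l *v y s l)) (at s within {0..})"
          using y \<open>k < n\<close> by (simp add: cascade_solution_def)
        show "norm (y s l) \<le> K * exp (- \<gamma> * s) * (\<Sum>l<n. norm (y 0 l))" if "l \<in> {k<..<n}" "s \<ge> 0" for l s
          using later[OF y] that by simp
        show "norm (y 0 k) \<le> (\<Sum>l<n. norm (y 0 l))"
          using \<open>k < n\<close> by (intro member_le_sum) auto
      qed (rule \<open>t \<ge> 0\<close>)
      then show ?thesis
        using True by simp
    next
      case False
      then show ?thesis
        using later[OF y _ \<open>l < n\<close> \<open>t \<ge> 0\<close>] \<open>k \<le> l\<close> by simp
    qed
    then show ?thesis
      by (rule exp_decay_bound_mono) (use \<open>t \<ge> 0\<close> \<open>K > 0\<close> \<open>K1 > 0\<close> in \<open>auto intro: sum_nonneg\<close>)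
  qed
  moreover have "max K K1 > 0" "min \<gamma> \<gamma>1 > 0"
    using \<open>K > 0\<close> \<open>\<gamma> > 0\<close> \<open>\<gamma>1 > 0\<close> by auto
  ultimately show ?thesis
    using that by blast
qed

lemma triangular_cascade_exp_decay:
  fixes D :: "nat \<Rightarrow> real^'n^'n" and E :: "nat \<Rightarrow> nat \<Rightarrow> real^'n^'n"
  assumes stable: "\<And>k. k < n \<Longrightarrow> exp_stable (\<lambda>z. D k *v z)"
  obtains K \<gamma> where "K > 0" "\<gamma> > 0"
    and "\<And>y k t. cascade_solution D E n y \<Longrightarrow> k < n \<Longrightarrow> t \<ge> 0 \<Longrightarrow>
      norm (y t k) \<le> K * exp (- \<gamma> * t) * (\<Sum>l<n. norm (y 0 l))"
proof -
  have "\<exists>K \<gamma>. K > 0 \<and> \<gamma> > 0 \<and> (\<forall>y l t. cascade_solution D E n y \<longrightarrow> n - d \<le> l \<longrightarrow> l < n \<longrightarrow> t \<ge> 0 \<longrightarrow>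
      norm (y t l) \<le> K * exp (- \<gamma> * t) * (\<Sum>l<n. norm (y 0 l)))" if "d \<le> n" for d
    using that
  proof (induction d)
    case 0
    show ?case
      by (intro exI[of _ 1]) auto
  next
    case (Suc d)
    then obtain K \<gamma> where "K > 0" "\<gamma> > 0" and IH: "\<And>y l t. cascade_solution D E n y \<Longrightarrow>
        n - d \<le> l \<Longrightarrow> l < n \<Longrightarrow> t \<ge> 0 \<Longrightarrow> norm (y t l) \<le> K * exp (- \<gamma> * t) * (\<Sum>l<n. norm (y 0 l))"
      by auto
    have k: "n - Suc d < n" "n - d = Suc (n - Suc d)"
      using Suc.prems by auto
    have later: "norm (y t l) \<le> K * exp (- \<gamma> * t) * (\<Sum>l<n. norm (y 0 l))"
      if "cascade_solution D E n y" "n - Suc d < l" "l < n" "t \<ge> 0" for y l t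
      using IH that k by simp
    obtain K' \<gamma>' where "K' > 0" "\<gamma>' > 0" and "\<And>y l t. cascade_solution D E n y \<Longrightarrow>
        n - Suc d \<le> l \<Longrightarrow> l < n \<Longrightarrow> t \<ge> 0 \<Longrightarrow> norm (y t l) \<le> K' * exp (- \<gamma>' * t) * (\<Sum>l<n. norm (y 0 l))"
      using cascade_exp_decay_step[where D = D and E = E and k = "n - Suc d",
          OF stable[OF k(1)] k(1) \<open>K > 0\<close> \<open>\<gamma> > 0\<close> later]
      by blast
    then show ?case
      by blast
  qed
  from this[of n] show ?thesis
    using that by auto
qed

section \<open>Quadratic Lyapunov functions\<close>

lemma quadratic_form_sym_part: "(x::real^'n) \<bullet> (sym_part M *v x) = x \<bullet> (M *v x)"
proof -
  have "x \<bullet> (transpose M *v x) = x \<bullet> (M *v x)"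
    by (metis dot_lmul_matrix inner_commute transpose_matrix_vector transpose_transpose)
  then show ?thesis
    by (simp add: sym_part_def matrix_vector_mult_add_rdistrib inner_add_right
        scaleR_matrix_vector_assoc[symmetric])
qed

lemma quadratic_form_le_onorm: "(x::real^'n) \<bullet> (M *v x) \<le> onorm ((*v) M) * (norm x)\<^sup>2"
proof -
  have "x \<bullet> (M *v x) \<le> norm x * norm (M *v x)"
    by (rule norm_cauchy_schwarz)
  also have "\<dots> \<le> norm x * (onorm ((*v) M) * norm x)"
    by (intro mult_left_mono onorm matrix_vector_mul_bounded_linear) simp
  finally show ?thesis
    by (simp add: power2_eq_square mult_ac)
qed

lemma pos_def_coercive:
  fixes P :: "real^'n^'n"
  assumes "pos_def P"
  obtains p where "p > 0" "\<And>x. p * (norm x)\<^sup>2 \<le> x \<bullet> (P *v x)"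
proof -
  let ?q = "\<lambda>x::real^'n. x \<bullet> (P *v x)"
  have "continuous_on (sphere 0 1) ?q"
    by (intro continuous_intros linear_continuous_on matrix_vector_mul_bounded_linear)
  moreover have "sphere (0::real^'n) 1 \<noteq> {}"
    using norm_axis_1 by (metis mem_sphere_0 empty_iff)
  ultimately obtain x0 where x0: "x0 \<in> sphere 0 1" and min: "\<And>y. y \<in> sphere 0 1 \<Longrightarrow> ?q x0 \<le> ?q y"
    using continuous_attains_inf[OF compact_sphere] by blast
  have "x0 \<noteq> 0"
    using x0 by auto
  then have "?q x0 > 0"
    using assms by (simp add: pos_def_def)
  moreover have "?q x0 * (norm x)\<^sup>2 \<le> ?q x" for x
  proof (cases "x = 0")
    case False
    have "?q x = (norm x)\<^sup>2 * ?q (x /\<^sub>R norm x)"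
      using False by (simp add: matrix_vector_mult_scaleR power2_eq_square field_simps)
    moreover have "?q x0 \<le> ?q (x /\<^sub>R norm x)"
      using False by (intro min) simp
    ultimately show ?thesis
      by (metis mult.commute mult_right_mono zero_le_power2)
  qed simp
  ultimately show ?thesis
    using that by blast
qed

lemma decay_of_differential_inequality:
  fixes V :: "real \<Rightarrow> real"
  assumes V': "\<And>t. t \<ge> 0 \<Longrightarrow> (V has_real_derivative V' t) (at t within {0..})"
    and le: "\<And>t. t \<ge> 0 \<Longrightarrow> V' t \<le> - a * V t" and "T \<ge> 0"
  shows "V T \<le> exp (- a * T) * V 0"
proof -
  define W where "W t = exp (a * t) * V t" for t
  have W': "(W has_real_derivative exp (a * t) * (a * V t + V' t)) (at t within {0..})" if "t \<ge> 0" for t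
    unfolding W_def using V'[OF that]
    by (auto intro!: derivative_eq_intros simp: algebra_simps)
  have "W T \<le> W 0"
  proof (rule DERIV_nonpos_imp_decreasing_open[OF \<open>T \<ge> 0\<close>])
    fix s assume s: "0 < s" "s < T"
    have "(W has_real_derivative exp (a * s) * (a * V s + V' s)) (at s within {0<..})"
      by (rule DERIV_subset[OF W']) (use s in auto)
    then have "(W has_real_derivative exp (a * s) * (a * V s + V' s)) (at s)"
      using at_within_open[of s "{0<..}"] s by auto
    moreover have "exp (a * s) * (a * V s + V' s) \<le> 0"
      using le[of s] s by (simp add: mult_nonneg_nonpos)
    ultimately show "\<exists>y. (W has_real_derivative y) (at s) \<and> y \<le> 0"
      by blast
  next
    show "continuous_on {0..T} W"
      by (rule DERIV_continuous_on[where D = "\<lambda>t. exp (a * t) * (a * V t + V' t)"])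
        (rule DERIV_subset[OF W'], auto)
  qed
  then show ?thesis
    by (simp add: W_def exp_minus field_simps)
qed

lemma has_real_derivative_quadratic_form:
  fixes P :: "real^'n^'n"
  assumes "transpose P = P" and x': "(x has_vector_derivative v) (at t within S)"
  shows "((\<lambda>t. x t \<bullet> (P *v x t)) has_real_derivative 2 * (x t \<bullet> (P *v v))) (at t within S)"
proof -
  have "v \<bullet> (P *v x t) = x t \<bullet> (P *v v)"
    by (metis assms(1) dot_lmul_matrix inner_commute transpose_matrix_vector)
  then have "x t \<bullet> (P *v v) + v \<bullet> (P *v x t) = 2 * (x t \<bullet> (P *v v))"
    by simp
  with bounded_bilinear.has_vector_derivative[OF bounded_bilinear_inner x'
      bounded_linear.has_vector_derivative[OF matrix_vector_mul_bounded_linear[of P] x']]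
  show ?thesis
    by (simp add: has_real_derivative_iff_has_vector_derivative)
qed

lemma quadratic_lyapunov_decay:
  fixes P D :: "real^'n^'n"
  assumes "transpose P = P"
    and dissipation: "\<And>x. x \<bullet> ((P ** D) *v x) \<le> - \<epsilon> * (norm x)\<^sup>2"
    and upper: "\<And>x. x \<bullet> (P *v x) \<le> q * (norm x)\<^sup>2" and "q > 0" "\<epsilon> \<ge> 0"
    and x': "\<forall>t\<ge>0. (x has_vector_derivative D *v x t) (at t within {0..})" and "T \<ge> 0"
  shows "x T \<bullet> (P *v x T) \<le> exp (- (2 * \<epsilon> / q) * T) * (x 0 \<bullet> (P *v x 0))"
proof (rule decay_of_differential_inequality[OF _ _ \<open>T \<ge> 0\<close>])
  fix t :: real assume "t \<ge> 0"
  from has_real_derivative_quadratic_form[OF assms(1) x'[rule_format, OF this]]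
  show "((\<lambda>t. x t \<bullet> (P *v x t)) has_real_derivative 2 * (x t \<bullet> ((P ** D) *v x t))) (at t within {0..})"
    by (simp add: matrix_vector_mul_assoc)
  have "2 * \<epsilon> / q * (x t \<bullet> (P *v x t)) \<le> 2 * \<epsilon> / q * (q * (norm (x t))\<^sup>2)"
    using upper \<open>q > 0\<close> \<open>\<epsilon> \<ge> 0\<close> by (intro mult_left_mono) auto
  then show "2 * (x t \<bullet> ((P ** D) *v x t)) \<le> - (2 * \<epsilon> / q) * (x t \<bullet> (P *v x t))"
    using dissipation[of "x t"] \<open>q > 0\<close> by simp
qed

lemma norm_le_of_quadratic_decay:
  fixes u v :: "'a::real_normed_vector"
  assumes "p > 0" "q > 0" and "p * (norm u)\<^sup>2 \<le> exp (- a * T) * (q * (norm v)\<^sup>2)"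
  shows "norm u \<le> sqrt (q / p) * exp (- (a / 2) * T) * norm v"
proof (rule power2_le_imp_le)
  have "(norm u)\<^sup>2 \<le> q / p * exp (- a * T) * (norm v)\<^sup>2"
    using assms by (simp add: le_divide_eq mult_ac)
  also have "\<dots> = (sqrt (q / p) * exp (- (a / 2) * T) * norm v)\<^sup>2"
  proof -
    have "(sqrt (q / p))\<^sup>2 = q / p" "(exp (- (a / 2) * T))\<^sup>2 = exp (- a * T)"
      using assms by (simp_all add: power2_eq_square flip: exp_add)
    then show ?thesis
      by (simp only: power_mult_distrib)
  qed
  finally show "(norm u)\<^sup>2 \<le> (sqrt (q / p) * exp (- (a / 2) * T) * norm v)\<^sup>2" .
  show "0 \<le> sqrt (q / p) * exp (- (a / 2) * T) * norm v"
    using assms by simp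
qed

lemma lyapunov_exp_stable:
  fixes P D :: "real^'n^'n"
  assumes "pos_def P" and "\<epsilon> > 0" and neg: "neg_def (sym_part (P ** D) + \<epsilon> *\<^sub>R mat 1)"
  shows "exp_stable (\<lambda>z. D *v z)"
proof -
  obtain p where "p > 0" and lower: "\<And>x. p * (norm x)\<^sup>2 \<le> x \<bullet> (P *v x)"
    using pos_def_coercive[OF \<open>pos_def P\<close>] by blast
  (* the summand 1 only makes the upper constant positive *)
  define q where "q = onorm ((*v) P) + 1"
  have "q > 0"
    unfolding q_def by (simp add: add_nonneg_pos onorm_pos_le)
  have upper: "x \<bullet> (P *v x) \<le> q * (norm x)\<^sup>2" for x
    using quadratic_form_le_onorm[of x P] zero_le_power2[of "norm x"]
    unfolding q_def distrib_right by linarith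
  have dissipation: "x \<bullet> ((P ** D) *v x) \<le> - \<epsilon> * (norm x)\<^sup>2" for x
  proof (cases "x = 0")
    case False
    then have "x \<bullet> ((sym_part (P ** D) + \<epsilon> *\<^sub>R mat 1) *v x) < 0"
      using neg by (simp add: neg_def_def)
    then show ?thesis
      by (simp add: matrix_vector_mult_add_rdistrib inner_add_right quadratic_form_sym_part
          scaleR_matrix_vector_assoc[symmetric] power2_norm_eq_inner)
  qed simp
  define a where "a = 2 * \<epsilon> / q"
  have "a > 0"
    using \<open>\<epsilon> > 0\<close> \<open>q > 0\<close> by (simp add: a_def)
  have decay: "norm (x T) \<le> sqrt (q / p) * exp (- (a / 2) * T) * norm (x 0)"
    if x': "\<forall>t\<ge>0. (x has_vector_derivative D *v x t) (at t within {0..})" and "T \<ge> 0" for x T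
  proof -
    have "x T \<bullet> (P *v x T) \<le> exp (- a * T) * (x 0 \<bullet> (P *v x 0))"
      unfolding a_def using \<open>pos_def P\<close> \<open>q > 0\<close> \<open>\<epsilon> > 0\<close>
      by (intro quadratic_lyapunov_decay[OF _ dissipation upper _ _ x' \<open>T \<ge> 0\<close>]) (auto simp: pos_def_def)
    then have "p * (norm (x T))\<^sup>2 \<le> exp (- a * T) * (q * (norm (x 0))\<^sup>2)"
      using lower[of "x T"] mult_left_mono[OF upper[of "x 0"] exp_ge_zero[of "- a * T"]] by linarith
    then show ?thesis
      by (rule norm_le_of_quadratic_decay[OF \<open>p > 0\<close> \<open>q > 0\<close>])
  qed
  show ?thesis
    unfolding exp_stable_def
  proof (rule exI[of _ "sqrt (q / p)"], rule exI[of _ "a / 2"], intro conjI allI impI)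
    show "sqrt (q / p) > 0"
      using \<open>p > 0\<close> \<open>q > 0\<close> by simp
    show "a / 2 > 0"
      using \<open>a > 0\<close> by simp
  qed (rule decay)
qed

section \<open>Modal coordinates of the coupled system\<close>

(* For W Lt = B W with B upper triangular, these coordinates turn the coupled system into a
   triangular cascade. *)
definition modal_coord :: "(nat \<Rightarrow> 'm \<Rightarrow> real) \<Rightarrow> nat \<Rightarrow> 'a^'m \<Rightarrow> 'a::real_vector" where
  "modal_coord W k X = (\<Sum>i\<in>UNIV. W k i *\<^sub>R X $ i)"

lemma bounded_linear_modal_coord: "bounded_linear (modal_coord W k :: 'a::real_normed_vector^'m \<Rightarrow> 'a)"
  unfolding modal_coord_def
  by (intro bounded_linear_sum bounded_linear_compose[OF bounded_linear_scaleR_right bounded_linear_vec_nth])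

lemma modal_coord_reconstruct:
  assumes "\<And>i j. (\<Sum>k<n. V i k * W k j) = (if i = j then 1 else 0)"
  shows "X $ i = (\<Sum>k<n. V i k *\<^sub>R modal_coord W k X)"
proof -
  have "(\<Sum>k<n. V i k *\<^sub>R modal_coord W k X) = (\<Sum>j\<in>UNIV. (\<Sum>k<n. V i k * W k j) *\<^sub>R X $ j)"
    by (simp add: modal_coord_def scaleR_sum_right scaleR_sum_left sum.swap[of _ "{..<n}"])
  also have "\<dots> = (\<Sum>j\<in>UNIV. if i = j then X $ j else 0)"
    by (intro sum.cong) (simp_all add: assms)
  also have "\<dots> = X $ i"
    by simp
  finally show ?thesis ..
qed

lemma matrix_vector_mult_modal_coord:
  fixes M :: "real^'n^'m"
  shows "M *v modal_coord W k X = modal_coord W k (\<chi> i. M *v X $ i)"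
  unfolding modal_coord_def
  by (simp add: linear_sum[OF matrix_vector_mul_linear] matrix_vector_mult_scaleR)

lemma modal_coord_coupled_rhs:
  fixes A :: "real^'n^'n" and C :: "real^'n^'q" and F :: "real^'q^'n" and Lt :: "real^'m^'m"
  assumes left_eigen: "\<And>j. (\<Sum>i\<in>UNIV. W k i * Lt $ i $ j) = (\<Sum>l<n. b k l * W l j)"
    and lower_zero: "\<And>l. l < k \<Longrightarrow> b k l = 0" and "k < n"
  shows "modal_coord W k (coupled_rhs A F C c Lt X)
    = (A + (c * b k k) *\<^sub>R (F ** C)) *v modal_coord W k X
      + (\<Sum>l\<in>{k<..<n}. ((c * b k l) *\<^sub>R (F ** C)) *v modal_coord W l X)"
proof -
  let ?G = "F ** C"
  let ?y = "\<lambda>l. modal_coord W l X"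
  have "modal_coord W k (\<chi> i. \<Sum>j\<in>UNIV. Lt $ i $ j *\<^sub>R (?G *v X $ j))
      = (\<Sum>j\<in>UNIV. (\<Sum>i\<in>UNIV. W k i * Lt $ i $ j) *\<^sub>R (?G *v X $ j))"
    unfolding modal_coord_def scaleR_sum_left by (simp add: scaleR_sum_right) (rule sum.swap)
  also have "\<dots> = (\<Sum>l<n. b k l *\<^sub>R modal_coord W l (\<chi> j. ?G *v X $ j))"
    unfolding left_eigen modal_coord_def scaleR_sum_left
    by (simp add: scaleR_sum_right) (rule sum.swap)
  also have "\<dots> = (\<Sum>l<n. b k l *\<^sub>R (?G *v ?y l))"
    by (simp add: matrix_vector_mult_modal_coord)
  also have "\<dots> = b k k *\<^sub>R (?G *v ?y k) + (\<Sum>l\<in>{k<..<n}. b k l *\<^sub>R (?G *v ?y l))"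
  proof -
    let ?g = "\<lambda>l. b k l *\<^sub>R (?G *v ?y l)"
    have "(\<Sum>l<n. ?g l) = (\<Sum>l\<in>{k..<n}. ?g l)"
      by (rule sum.mono_neutral_right) (auto simp: lower_zero)
    also have "\<dots> = ?g k + (\<Sum>l\<in>{k<..<n}. ?g l)"
      using \<open>k < n\<close> by (simp add: sum.atLeast_Suc_lessThan atLeastSucLessThan_greaterThanLessThan)
    finally show ?thesis .
  qed
  finally have coupling: "modal_coord W k (\<chi> i. \<Sum>j\<in>UNIV. Lt $ i $ j *\<^sub>R (?G *v X $ j))
      = b k k *\<^sub>R (?G *v ?y k) + (\<Sum>l\<in>{k<..<n}. b k l *\<^sub>R (?G *v ?y l))" .
  have "coupled_rhs A F C c Lt X = (\<chi> i. A *v X $ i) + c *\<^sub>R (\<chi> i. \<Sum>j\<in>UNIV. Lt $ i $ j *\<^sub>R (?G *v X $ j))"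
    by (simp add: coupled_rhs_def Finite_Cartesian_Product.vec_eq_iff matrix_vector_mul_assoc)
  then have "modal_coord W k (coupled_rhs A F C c Lt X)
      = A *v ?y k + c *\<^sub>R (b k k *\<^sub>R (?G *v ?y k) + (\<Sum>l\<in>{k<..<n}. b k l *\<^sub>R (?G *v ?y l)))"
    by (simp add: linear_add[OF bounded_linear.linear[OF bounded_linear_modal_coord]]
        linear_scale[OF bounded_linear.linear[OF bounded_linear_modal_coord]]
        coupling matrix_vector_mult_modal_coord)
  then show ?thesis
    by (simp add: matrix_vector_mult_add_rdistrib scaleR_sum_right scaleR_add_right
        scaleR_matrix_vector_assoc[symmetric])
qed

lemma norm_le_of_modal_coord_bound:
  assumes left_inverse: "\<And>i j. (\<Sum>k<n. V i k * W k j) = (if i = j then 1 else 0)"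
    and bound: "\<And>k. k < n \<Longrightarrow> norm (modal_coord W k X) \<le> r"
  shows "norm X \<le> (\<Sum>i\<in>UNIV. \<Sum>k<n. \<bar>V i k\<bar>) * r"
proof -
  have "norm X \<le> (\<Sum>i\<in>UNIV. norm (X $ i))"
    by (rule norm_vec_le_sum_norm)
  also have "\<dots> \<le> (\<Sum>i\<in>UNIV. \<Sum>k<n. \<bar>V i k\<bar> * r)"
  proof (intro sum_mono)
    fix i
    have "norm (X $ i) \<le> (\<Sum>k<n. \<bar>V i k\<bar> * norm (modal_coord W k X))"
      unfolding modal_coord_reconstruct[OF left_inverse, of X i]
      by (rule order_trans[OF norm_sum]) simp
    also have "\<dots> \<le> (\<Sum>k<n. \<bar>V i k\<bar> * r)"
      using bound by (intro sum_mono mult_left_mono) auto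
    finally show "norm (X $ i) \<le> (\<Sum>k<n. \<bar>V i k\<bar> * r)" .
  qed
  also have "\<dots> = (\<Sum>i\<in>UNIV. \<Sum>k<n. \<bar>V i k\<bar>) * r"
    by (simp add: sum_distrib_right)
  finally show ?thesis .
qed

lemma cascade_solution_modal_coord:
  fixes A :: "real^'n^'n" and C :: "real^'n^'q" and F :: "real^'q^'n" and Lt :: "real^'m^'m"
    and W :: "nat \<Rightarrow> 'm \<Rightarrow> real" and b :: "nat \<Rightarrow> nat \<Rightarrow> real"
  assumes left_eigen: "\<And>k j. k < n \<Longrightarrow> (\<Sum>i\<in>UNIV. W k i * Lt $ i $ j) = (\<Sum>l<n. b k l * W l j)"
    and lower_zero: "\<And>k l. k < n \<Longrightarrow> l < k \<Longrightarrow> b k l = 0"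
    and X: "\<forall>t\<ge>0. (X has_vector_derivative coupled_rhs A F C c Lt (X t)) (at t within {0..})"
  shows "cascade_solution (\<lambda>k. A + (c * b k k) *\<^sub>R (F ** C)) (\<lambda>k l. (c * b k l) *\<^sub>R (F ** C)) n
    (\<lambda>t k. modal_coord W k (X t))"
proof -
  have "((\<lambda>t. modal_coord W k (X t)) has_vector_derivative (A + (c * b k k) *\<^sub>R (F ** C)) *v modal_coord W k (X s)
      + (\<Sum>l\<in>{k<..<n}. ((c * b k l) *\<^sub>R (F ** C)) *v modal_coord W l (X s))) (at s within {0..})"
    if "k < n" "s \<ge> 0" for k s
  proof -
    have "((\<lambda>t. modal_coord W k (X t)) has_vector_derivative modal_coord W k (coupled_rhs A F C c Lt (X s)))
        (at s within {0..})"
      by (rule bounded_linear.has_vector_derivative[OF bounded_linear_modal_coord X[rule_format, OF \<open>s \<ge> 0\<close>]])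
    moreover have "modal_coord W k (coupled_rhs A F C c Lt (X s)) = (A + (c * b k k) *\<^sub>R (F ** C)) *v modal_coord W k (X s)
        + (\<Sum>l\<in>{k<..<n}. ((c * b k l) *\<^sub>R (F ** C)) *v modal_coord W l (X s))"
      by (rule modal_coord_coupled_rhs) (use left_eigen lower_zero \<open>k < n\<close> in auto)
    ultimately show ?thesis
      by simp
  qed
  then show ?thesis
    unfolding cascade_solution_def by blast
qed

lemma coupled_exp_stable_of_triangularization:
  fixes A :: "real^'n^'n" and C :: "real^'n^'q" and F :: "real^'q^'n" and Lt :: "real^'m^'m"
    and n :: nat and W :: "nat \<Rightarrow> 'm \<Rightarrow> real" and V :: "'m \<Rightarrow> nat \<Rightarrow> real" and b :: "nat \<Rightarrow> nat \<Rightarrow> real"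
  assumes left_eigen: "\<And>k j. k < n \<Longrightarrow> (\<Sum>i\<in>UNIV. W k i * Lt $ i $ j) = (\<Sum>l<n. b k l * W l j)"
    and lower_zero: "\<And>k l. k < n \<Longrightarrow> l < k \<Longrightarrow> b k l = 0"
    and left_inverse: "\<And>i j. (\<Sum>k<n. V i k * W k j) = (if i = j then 1 else 0)"
    and stable: "\<And>k. k < n \<Longrightarrow> exp_stable (\<lambda>z. (A + (c * b k k) *\<^sub>R (F ** C)) *v z)"
  shows "exp_stable (coupled_rhs A F C c Lt)"
proof -
  obtain K \<gamma> where "K > 0" "\<gamma> > 0" and cascade: "\<And>y k t.
      cascade_solution (\<lambda>k. A + (c * b k k) *\<^sub>R (F ** C)) (\<lambda>k l. (c * b k l) *\<^sub>R (F ** C)) n y \<Longrightarrow>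
      k < n \<Longrightarrow> t \<ge> 0 \<Longrightarrow> norm (y t k) \<le> K * exp (- \<gamma> * t) * (\<Sum>l<n. norm (y 0 l))"
    using triangular_cascade_exp_decay[where D = "\<lambda>k. A + (c * b k k) *\<^sub>R (F ** C)"
        and E = "\<lambda>k l. (c * b k l) *\<^sub>R (F ** C)", OF stable]
    by blast
  define NW where "NW = (\<Sum>l<n. onorm (modal_coord W l :: real^'n^'m \<Rightarrow> real^'n))"
  define NV where "NV = (\<Sum>i\<in>UNIV. \<Sum>k<n. \<bar>V i k\<bar>)"
  have "NW \<ge> 0" "NV \<ge> 0"
    unfolding NW_def NV_def by (auto intro!: sum_nonneg onorm_pos_le bounded_linear_modal_coord)
  have "norm (X t) \<le> (NV * K * NW + 1) * exp (- \<gamma> * t) * norm (X 0)"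
    if X: "\<forall>t\<ge>0. (X has_vector_derivative coupled_rhs A F C c Lt (X t)) (at t within {0..})"
      and "t \<ge> 0" for X t
  proof -
    define y where "y = (\<lambda>t k. modal_coord W k (X t))"
    have y: "cascade_solution (\<lambda>k. A + (c * b k k) *\<^sub>R (F ** C)) (\<lambda>k l. (c * b k l) *\<^sub>R (F ** C)) n y"
      unfolding y_def using left_eigen lower_zero X by (rule cascade_solution_modal_coord)
    have initial: "(\<Sum>l<n. norm (y 0 l)) \<le> NW * norm (X 0)"
      unfolding y_def NW_def sum_distrib_right
      by (intro sum_mono onorm bounded_linear_modal_coord)
    have "norm (y t k) \<le> K * exp (- \<gamma> * t) * NW * norm (X 0)" if "k < n" for k
    proof -
      have "norm (y t k) \<le> K * exp (- \<gamma> * t) * (\<Sum>l<n. norm (y 0 l))"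
        by (rule cascade[OF y that \<open>t \<ge> 0\<close>])
      also have "\<dots> \<le> K * exp (- \<gamma> * t) * (NW * norm (X 0))"
        using initial \<open>K > 0\<close> by (intro mult_left_mono) auto
      finally show ?thesis
        by (simp add: mult.assoc)
    qed
    then have "norm (X t) \<le> NV * (K * exp (- \<gamma> * t) * NW * norm (X 0))"
      unfolding NV_def y_def by (rule norm_le_of_modal_coord_bound[OF left_inverse])
    also have "\<dots> \<le> (NV * K * NW + 1) * exp (- \<gamma> * t) * norm (X 0)"
      by (simp add: algebra_simps)
    finally show ?thesis .
  qed
  moreover have "NV * K * NW + 1 > 0"
    using \<open>NV \<ge> 0\<close> \<open>K > 0\<close> \<open>NW \<ge> 0\<close> by (simp add: add_nonneg_pos)
  ultimately show ?thesis
    unfolding exp_stable_def using \<open>\<gamma> > 0\<close> by blast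
qed

theorem theorem6:
  fixes A :: "real^'n^'n" and C :: "real^'n^'q" and F :: "real^'q^'n"
    and c \<epsilon> :: real and L Lt :: "real^'m^'m" and i1 :: 'm
    and lam :: "nat \<Rightarrow> real"
  assumes c_pos: "c > 0"
    and L_irr: "irreducible_mat L"
    and L_rank: "rank L = CARD('m) - 1"
    and L_offdiag: "\<forall>i j. i \<noteq> j \<longrightarrow> L $ i $ j \<ge> 0"
    and L_rows: "\<forall>i. (\<Sum>j\<in>UNIV. L $ i $ j) = 0"
    and eps_pos: "\<epsilon> > 0"
    and Lt_def: "Lt = (\<chi> i j. if i = i1 \<and> j = i1 then L $ i $ j - \<epsilon> else L $ i $ j)"
    and lam_eig: "\<forall>x::real. det (x *\<^sub>R mat 1 - Lt) = (\<Prod>k\<in>{1..CARD('m)}. (x - lam k))"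
    and lam_neg: "0 > lam 1"
    and lam_ord: "\<forall>k\<in>{1..<CARD('m)}. lam (Suc k) \<le> lam k"
    and cond: "(\<forall>k\<in>{1..CARD('m)}. exp_stable (\<lambda>z::real^'n. (A + (c * lam k) *\<^sub>R (F ** C)) *v z))
             \<or> (\<exists>P \<epsilon>'. pos_def P \<and> \<epsilon>' > 0 \<and>
                  (\<forall>k\<in>{1..CARD('m)}.
                     neg_def (sym_part (P ** (A + (c * lam k) *\<^sub>R (F ** C))) + \<epsilon>' *\<^sub>R mat 1)))"
  shows "exp_stable (coupled_rhs A F C c Lt)"
proof (rule real_spectrum_left_triangularization[OF lam_eig])
  fix W V b
  assume left_eigen: "\<And>k j. k < CARD('m) \<Longrightarrow> (\<Sum>i\<in>UNIV. W k i * Lt $ i $ j) = (\<Sum>l<CARD('m). b k l * W l j)"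
    and lower_zero: "\<And>k l. k < CARD('m) \<Longrightarrow> l < k \<Longrightarrow> b k l = 0"
    and diagonal: "\<And>k. k < CARD('m) \<Longrightarrow> b k k \<in> lam ` {1..CARD('m)}"
    and left_inverse: "\<And>i j. (\<Sum>k<CARD('m). V i k * W k j) = (if i = j then 1 else 0)"
  have stable: "exp_stable (\<lambda>z. (A + (c * lam k) *\<^sub>R (F ** C)) *v z)" if "k \<in> {1..CARD('m)}" for k
    using cond
  proof
    assume "\<exists>P \<epsilon>'. pos_def P \<and> \<epsilon>' > 0 \<and> (\<forall>k\<in>{1..CARD('m)}.
        neg_def (sym_part (P ** (A + (c * lam k) *\<^sub>R (F ** C))) + \<epsilon>' *\<^sub>R mat 1))"
    with that show ?thesis
      by (blast intro: lyapunov_exp_stable)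
  qed (use that in blast)
  show ?thesis
  proof (rule coupled_exp_stable_of_triangularization[OF left_eigen lower_zero left_inverse])
    fix k assume "k < CARD('m)"
    with diagonal obtain k' where "k' \<in> {1..CARD('m)}" "b k k = lam k'"
      by blast
    with stable show "exp_stable (\<lambda>z. (A + (c * b k k) *\<^sub>R (F ** C)) *v z)"
      by simp
  qed
qed

end
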